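(* There exists a boolean, exchangeable, two-dimensional random array $\boldsymbol{X}=\langle X_s:s\in\binom{\mathbb{N}}{2}\rangle$ on $\mathbb{N}$ with the following properties. (1) For every $s\in\binom{\mathbb{N}}{2}$, $\mathbb{E}[X_s]=\frac12$. (2) For every distinct $s,t\in\binom{\mathbb{N}}{2}$, $\mathbb{E}[X_sX_t]=\frac14$. (3) For every 2-dimensional box $B$ of $\mathbb{N}$ and every nonempty $G\subseteq B$ with $G\neq B$, $\mathbb{E}[\prod_{s\in G}X_s]=(\frac12)^{|G|}$. (4) For every 2-dimensional box $B$ of $\mathbb{N}$, $\mathbb{E}[\prod_{s\in B}X_s]=\frac32(\frac12)^4$. (5) For every integer $n\geqslant8$, letting $\boldsymbol{X}_n=\langle X_s:s\in\binom{[n]}{2}\rangle$, there exists a translated multilinear polynomial $f\colon\mathbb{R}^{\binom{[n]}{2}}\to\mathbb{R}$ of degree 4 with $\mathbb{E}[f(\boldsymbol{X}_n)]=0$ and $\|f(\boldsymbol{X}_n)\|_{L_\infty}\leqslant1$ such that for every $I\subseteq[n]$ with $|I|\geqslant8$, $\mathbb{P}\big(\big|\mathbb{E}[f(\boldsymbol{X}_n)\,|\,\mathcal{F}_I]\big|\geqslant2^{-11}\big)\geqslant2^{-11}$.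
   Context: $\binom{I}{d}$ is the set of $d$-element subsets of $I$. A $d$-dimensional random array on $\mathbb{N}$ is exchangeable if for every finitely supported permutation $\pi$ of $\mathbb{N}$, $\boldsymbol{X}$ and $\langle X_{\pi(s)}:s\in\binom{\mathbb{N}}{d}\rangle$ have the same law. A 2-dimensional box of $\mathbb{N}$ is a set $\{s\in\binom{\mathbb{N}}{2}:|s\cap H_1|=|s\cap H_2|=1\}$ for 2-element sets $H_1,H_2\subseteq\mathbb{N}$ with $\max(H_1)<\min(H_2)$. $\mathcal{F}_I=\sigma(\{X_s:s\in\binom{I}{2}\})$. A translated multilinear polynomial of degree 4 is a multilinear polynomial of degree 4 plus a constant. *)

theory Defs
  imports "HOL-Probability.Probability"
begin

definition binom :: "'a set \<Rightarrow> nat \<Rightarrow> 'a set set" where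
  "binom I d = {s. s \<subseteq> I \<and> finite s \<and> card s = d}"

definition box2 :: "nat set \<Rightarrow> nat set \<Rightarrow> nat set set" where
  "box2 H1 H2 = {s \<in> binom UNIV 2. card (s \<inter> H1) = 1 \<and> card (s \<inter> H2) = 1}"

definition is_box2 :: "nat set set \<Rightarrow> bool" where
  "is_box2 B \<longleftrightarrow> (\<exists>H1 H2. card H1 = 2 \<and> card H2 = 2 \<and> Max H1 < Min H2 \<and> B = box2 H1 H2)"

definition fin_perm :: "(nat \<Rightarrow> nat) \<Rightarrow> bool" where
  "fin_perm \<pi> \<longleftrightarrow> bij \<pi> \<and> finite {i. \<pi> i \<noteq> i}"

definition array_law :: "'w measure \<Rightarrow> (nat set \<Rightarrow> 'w \<Rightarrow> bool) \<Rightarrow> (nat set \<Rightarrow> bool) measure" where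
  "array_law M X = distr M (Pi\<^sub>M (binom UNIV 2) (\<lambda>_. count_space UNIV))
      (\<lambda>\<omega>. \<lambda>s\<in>binom UNIV 2. X s \<omega>)"

definition exchangeable2 :: "'w measure \<Rightarrow> (nat set \<Rightarrow> 'w \<Rightarrow> bool) \<Rightarrow> bool" where
  "exchangeable2 M X \<longleftrightarrow>
     (\<forall>\<pi>. fin_perm \<pi> \<longrightarrow> array_law M (\<lambda>s. X (\<pi> ` s)) = array_law M X)"

definition tmpoly4 :: "nat \<Rightarrow> real \<Rightarrow> (nat set set \<Rightarrow> real) \<Rightarrow> (nat set \<Rightarrow> real) \<Rightarrow> real" where
  "tmpoly4 n c a x = c + (\<Sum>G\<in>binom (binom {1..n} 2) 4. a G * (\<Prod>s\<in>G. x s))"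

definition has_degree4 :: "nat \<Rightarrow> (nat set set \<Rightarrow> real) \<Rightarrow> bool" where
  "has_degree4 n a \<longleftrightarrow> (\<exists>G\<in>binom (binom {1..n} 2) 4. a G \<noteq> 0)"

definition gen_sigma :: "'w measure \<Rightarrow> (nat set \<Rightarrow> 'w \<Rightarrow> bool) \<Rightarrow> nat set \<Rightarrow> 'w measure" where
  "gen_sigma M X I = sigma (space M) {X s -` A \<inter> space M | s A. s \<in> binom I 2}"

end

theory Submission
  imports Defs
begin

(* X is a mixture, driven by a fair coin, of two random graphs on the naturals: the random graph
   G(N, 1/2) and a uniformly random complete bipartite graph (the cut of a random 2-colouring
   of the vertices).  Both have independent fair edges along every forest, so all moments of
   acyclic edge sets, in particular of single edges, pairs of edges and proper subsets of a box,
   agree with those of independent fair coins.  A box is a 4-cycle, and an even cycle lies in a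
   random cut with probability 1/8 instead of 1/16, which gives the moment 3/32 = 3/2 * 2^-4.
   The polynomial f = X_box0 - 3/32 is centred, but its conditional expectation given F_I is not
   small: an odd cycle never lies in a cut, so on the event (of probability 1/16) that a triangle
   inside I is present the graph is G(N, 1/2), and there E[f | F_I] = h 2^-m - 3/32 with h in
   {0, 1} and m <= 4, which is at least 1/32 in absolute value. *)

section \<open>Independent fair coins\<close>

definition coin :: "bool measure" where
  "coin = measure_pmf (pmf_of_set UNIV)"

definition coins :: "(nat set \<Rightarrow> bool) measure" where
  "coins = (\<Pi>\<^sub>M _\<in>UNIV. coin)"

lemma prob_space_coin: "prob_space coin"
  unfolding coin_def by (rule prob_space_measure_pmf)

lemma space_coin [simp]: "space coin = UNIV" and sets_coin [simp]: "sets coin = UNIV"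
  unfolding coin_def by simp_all

lemma integral_coin: "(\<integral>b. g b \<partial>coin) = (g True + g False) / (2 :: real)"
  unfolding coin_def by (simp add: integral_pmf_of_set UNIV_bool)

lemma emeasure_coin_singleton [simp]: "emeasure coin {b} = 1/2"
  unfolding coin_def by (simp add: emeasure_pmf_single divide_ennreal_def)

interpretation coins: product_prob_space "\<lambda>_. coin" UNIV
  by (simp add: product_prob_space_def product_sigma_finite_def product_prob_space_axioms_def
      prob_space_coin prob_space_imp_sigma_finite)

lemma prob_space_coins: "prob_space coins"
  unfolding coins_def by (rule coins.P.prob_space_axioms)

lemma space_coins [simp]: "space coins = UNIV"
  unfolding coins_def by (simp add: space_PiM)

lemma measurable_coin_count_space [simp]: "measurable M coin = measurable M (count_space UNIV)"
  by (simp add: measurable_def)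

lemma borel_measurable_coin [measurable]: "g \<in> borel_measurable coin"
  by (simp add: measurable_def)

lemma measurable_coord [measurable]: "(\<lambda>\<omega>. \<omega> j) \<in> measurable coins (count_space UNIV)"
  using measurable_component_singleton[of j UNIV "\<lambda>_. coin"] unfolding coins_def by simp

lemma integrable_coins_bounded:
  fixes f :: "_ \<Rightarrow> real"
  assumes "f \<in> borel_measurable coins" and "\<And>\<omega>. \<bar>f \<omega>\<bar> \<le> B"
  shows "integrable coins f"
  using prob_space_coins assms
  by (intro finite_measure.integrable_const_bound[where B=B]) (auto simp: prob_space_def)

lemma integral_coins_prod:
  assumes "finite J"
  shows "(\<integral>\<omega>. (\<Prod>j\<in>J. g j (\<omega> j)) \<partial>coins) = (\<Prod>j\<in>J. (g j True + g j False) / (2 :: real))"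
proof -
  have "(\<integral>\<omega>. (\<Prod>j\<in>J. g j (\<omega> j)) \<partial>coins) =
      (\<integral>\<omega>. (\<Prod>j\<in>J. g j (\<omega> j)) \<partial>distr coins (\<Pi>\<^sub>M _\<in>J. coin) (\<lambda>\<omega>. restrict \<omega> J))"
    unfolding coins_def by (subst integral_distr) (auto intro: measurable_restrict_subset)
  also have "\<dots> = (\<integral>\<omega>. (\<Prod>j\<in>J. g j (\<omega> j)) \<partial>(\<Pi>\<^sub>M _\<in>J. coin))"
    unfolding coins_def using assms by (subst coins.distr_PiM_restrict_finite) auto
  also have "\<dots> = (\<Prod>j\<in>J. (\<integral>b. g j b \<partial>coin))"
    using assms unfolding coin_def
    by (intro product_sigma_finite.product_integral_prod integrable_measure_pmf_finite)
       (simp_all add: product_sigma_finite_def prob_space_imp_sigma_finite prob_space_measure_pmf)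
  finally show ?thesis by (simp add: integral_coin)
qed

lemma measurable_coords_5:
  "(\<lambda>\<omega>. (\<omega> j1, \<omega> j2, \<omega> j3, \<omega> j4, \<omega> j5)) \<in> measurable coins (count_space UNIV)"
proof (clarsimp simp: measurable_count_space_eq2_countable)
  fix a1 a2 a3 a4 a5
  have "(\<lambda>\<omega>. (\<omega> j1, \<omega> j2, \<omega> j3, \<omega> j4, \<omega> j5)) -` {(a1, a2, a3, a4, a5)} =
      {\<omega> \<in> space coins. \<omega> j1 = a1 \<and> \<omega> j2 = a2 \<and> \<omega> j3 = a3 \<and> \<omega> j4 = a4 \<and> \<omega> j5 = a5}"
    by auto
  also have "\<dots> \<in> sets coins" by measurable
  finally show "(\<lambda>\<omega>. (\<omega> j1, \<omega> j2, \<omega> j3, \<omega> j4, \<omega> j5)) -` {(a1, a2, a3, a4, a5)} \<in> sets coins" .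
qed

lemma distr_coins_5:
  assumes "distinct [j1, j2, j3, j4, j5]"
  shows "distr coins (count_space UNIV) (\<lambda>\<omega>. (\<omega> j1, \<omega> j2, \<omega> j3, \<omega> j4, \<omega> j5)) =
    measure_pmf (pmf_of_set UNIV)"
proof (rule measure_eqI_countable[where A=UNIV])
  fix a :: "bool \<times> bool \<times> bool \<times> bool \<times> bool"
  obtain a1 a2 a3 a4 a5 where a: "a = (a1, a2, a3, a4, a5)" by (cases a) auto
  define J where "J = {j1, j2, j3, j4, j5}"
  define val where "val j = (if j = j1 then a1 else if j = j2 then a2 else if j = j3 then a3
    else if j = j4 then a4 else a5)" for j
  have ne: "j1 \<noteq> j2" "j1 \<noteq> j3" "j1 \<noteq> j4" "j1 \<noteq> j5" "j2 \<noteq> j3" "j2 \<noteq> j4" "j2 \<noteq> j5"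
    "j3 \<noteq> j4" "j3 \<noteq> j5" "j4 \<noteq> j5"
    using assms by auto
  have "(\<lambda>\<omega>. (\<omega> j1, \<omega> j2, \<omega> j3, \<omega> j4, \<omega> j5)) -` {a} \<inter> space coins =
      {\<omega> \<in> space coins. \<forall>j\<in>J. \<omega> j \<in> {val j}}"
    unfolding a J_def val_def by (auto simp: ne ne[symmetric])
  then have "emeasure (distr coins (count_space UNIV) (\<lambda>\<omega>. (\<omega> j1, \<omega> j2, \<omega> j3, \<omega> j4, \<omega> j5))) {a} =
      emeasure coins {\<omega> \<in> space coins. \<forall>j\<in>J. \<omega> j \<in> {val j}}"
    by (simp add: emeasure_distr[OF measurable_coords_5])
  also have "\<dots> = (\<Prod>j\<in>J. emeasure coin {val j})"
    unfolding coins_def by (rule coins.emeasure_PiM_Collect) (auto simp: J_def)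
  also have "\<dots> = 1/2 * (1/2 * (1/2 * (1/2 * (1/2))))"
    unfolding J_def by (simp add: ne ne[symmetric])
  also have "\<dots> = emeasure (measure_pmf (pmf_of_set UNIV)) {a}"
  proof -
    have "(1/2 :: ennreal) = ennreal (1/2)" by (simp add: divide_ennreal_def)
    then show ?thesis
      by (simp add: emeasure_pmf_single card_UNIV_bool ennreal_mult[symmetric] del: ennreal_half)
  qed
  finally show "emeasure (distr coins (count_space UNIV) (\<lambda>\<omega>. (\<omega> j1, \<omega> j2, \<omega> j3, \<omega> j4, \<omega> j5))) {a} =
      emeasure (measure_pmf (pmf_of_set UNIV)) {a}" .
qed simp_all

lemma integral_coins_5:
  assumes "distinct [j1, j2, j3, j4, j5]"
  shows "(\<integral>\<omega>. \<phi> (\<omega> j1) (\<omega> j2) (\<omega> j3) (\<omega> j4) (\<omega> j5) \<partial>coins) =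
    (\<Sum>x1\<in>UNIV. \<Sum>x2\<in>UNIV. \<Sum>x3\<in>UNIV. \<Sum>x4\<in>UNIV. \<Sum>x5\<in>UNIV. \<phi> x1 x2 x3 x4 x5) / (32 :: real)"
proof -
  let ?\<psi> = "\<lambda>(x1, x2, x3, x4, x5). \<phi> x1 x2 x3 x4 x5"
  have "(\<integral>\<omega>. \<phi> (\<omega> j1) (\<omega> j2) (\<omega> j3) (\<omega> j4) (\<omega> j5) \<partial>coins) =
      (\<integral>x. ?\<psi> x \<partial>distr coins (count_space UNIV) (\<lambda>\<omega>. (\<omega> j1, \<omega> j2, \<omega> j3, \<omega> j4, \<omega> j5)))"
    by (subst integral_distr[OF measurable_coords_5]) simp_all
  also have "\<dots> = (\<Sum>x\<in>UNIV. ?\<psi> x) / 32"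
    by (simp add: distr_coins_5[OF assms] integral_pmf_of_set card_UNIV_bool)
  also have "(\<Sum>x\<in>UNIV. ?\<psi> x) = (\<Sum>x1\<in>UNIV. \<Sum>x2\<in>UNIV. \<Sum>x3\<in>UNIV. \<Sum>x4\<in>UNIV. \<Sum>x5\<in>UNIV. \<phi> x1 x2 x3 x4 x5)"
    by (subst UNIV_Times_UNIV[symmetric])+
       (simp only: sum.cartesian_product[symmetric] split_beta fst_conv snd_conv)
  finally show ?thesis .
qed

section \<open>The mixture of G(N, 1/2) and a random cut\<close>

definition cut_edge :: "(nat set \<Rightarrow> bool) \<Rightarrow> nat set \<Rightarrow> bool" where
  "cut_edge \<omega> s \<longleftrightarrow> \<omega> {Min s} \<noteq> \<omega> {Max s}"

(* The coordinate {} of \<omega> is the mixing coin, the coordinates in binom UNIV 2 are the edges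
   of G(N, 1/2), and the coordinates {v} colour the vertices for the random cut. *)
definition mix_array :: "nat set \<Rightarrow> (nat set \<Rightarrow> bool) \<Rightarrow> bool" where
  "mix_array s \<omega> = (if \<omega> {} then \<omega> s else cut_edge \<omega> s)"

lemma measurable_mix_array [measurable]: "mix_array s \<in> measurable coins (count_space UNIV)"
  unfolding mix_array_def cut_edge_def by measurable

lemma binom_2_obtain:
  fixes s :: "'a :: linorder set"
  assumes "s \<in> binom A 2"
  obtains a b where "a < b" "a \<in> A" "b \<in> A" "s = {a, b}"
proof -
  obtain x y where xy: "s = {x, y}" "x \<noteq> y" using assms by (auto simp: binom_def card_2_iff)
  moreover have "x \<in> A" "y \<in> A" using assms xy(1) by (auto simp: binom_def)
  moreover have "s = {y, x}" using xy(1) by (simp add: insert_commute)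
  ultimately show ?thesis using that by (cases x y rule: linorder_cases) blast+
qed

definition cycle4 :: "nat \<Rightarrow> nat \<Rightarrow> nat \<Rightarrow> nat \<Rightarrow> nat set set" where
  "cycle4 p q r t = {{p, q}, {q, r}, {r, t}, {t, p}}"

lemma cut_edge_doubleton [simp]: "cut_edge \<omega> {u, v} \<longleftrightarrow> \<omega> {u} \<noteq> \<omega> {v}"
  by (cases "u \<le> v") (auto simp: cut_edge_def min_def max_def insert_commute)

lemma card_cycle4: "distinct [p, q, r, t] \<Longrightarrow> card (cycle4 p q r t) = 4"
  by (auto simp: cycle4_def doubleton_eq_iff)

lemma integral_cut_edges_cycle4:
  assumes "distinct [p, q, r, t]" and "G \<subseteq> cycle4 p q r t"
  shows "(\<integral>\<omega>. of_bool (\<not> \<omega> {}) * (\<Prod>s\<in>G. of_bool (cut_edge \<omega> s)) \<partial>coins) =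
    (if G = cycle4 p q r t then 1/16 else (1/2::real) ^ (card G + 1))"
proof -
  define C where "C = cycle4 p q r t"
  let ?g1 = "{p, q} \<in> G" and ?g2 = "{q, r} \<in> G" and ?g3 = "{r, t} \<in> G" and ?g4 = "{t, p} \<in> G"
  let ?f = "\<lambda>g (b :: bool). if g then of_bool b else (1 :: real)"
  have ne: "{p, q} \<noteq> {q, r}" "{p, q} \<noteq> {r, t}" "{p, q} \<noteq> {t, p}" "{q, r} \<noteq> {r, t}"
    "{q, r} \<noteq> {t, p}" "{r, t} \<noteq> {t, p}"
    using assms(1) by (auto simp: doubleton_eq_iff)
  have G: "C \<inter> G = G" using assms(2) by (auto simp: C_def)
  have finite: "finite C" by (simp add: C_def cycle4_def)
  have prod: "(\<Prod>s\<in>G. of_bool (cut_edge \<omega> s)) = ?f ?g1 (\<omega> {p} \<noteq> \<omega> {q}) *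
      (?f ?g2 (\<omega> {q} \<noteq> \<omega> {r}) * (?f ?g3 (\<omega> {r} \<noteq> \<omega> {t}) * ?f ?g4 (\<omega> {t} \<noteq> \<omega> {p})))" for \<omega>
  proof -
    have "(\<Prod>s\<in>G. of_bool (cut_edge \<omega> s)) =
        (\<Prod>s\<in>C. if s \<in> G then of_bool (cut_edge \<omega> s) else (1::real))"
      using prod.inter_restrict[OF finite, of "\<lambda>s. of_bool (cut_edge \<omega> s) :: real" G]
        by (simp only: G)
    then show ?thesis using ne by (simp add: C_def cycle4_def)
  qed
  have card: "card G = of_bool ?g1 + of_bool ?g2 + of_bool ?g3 + of_bool ?g4"
  proof -
    have "card G = (\<Sum>s\<in>C \<inter> G. 1)" by (simp add: G)
    also have "\<dots> = (\<Sum>s\<in>C. if s \<in> G then 1 else 0)" by (rule sum.inter_restrict[OF finite])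
    finally show ?thesis using ne by (simp add: C_def cycle4_def)
  qed
  have full: "G = C \<longleftrightarrow> ?g1 \<and> ?g2 \<and> ?g3 \<and> ?g4"
    using assms(2) by (auto simp: C_def cycle4_def)
  have "distinct [{}, {p}, {q}, {r}, {t}]" using assms(1) by auto
  from integral_coins_5[OF this, of "\<lambda>x0 xp xq xr xt. of_bool (\<not> x0) * (?f ?g1 (xp \<noteq> xq) *
      (?f ?g2 (xq \<noteq> xr) * (?f ?g3 (xr \<noteq> xt) * ?f ?g4 (xt \<noteq> xp))))"]
  show ?thesis
    unfolding prod card C_def[symmetric] full
    by (cases ?g1; cases ?g2; cases ?g3; cases ?g4) (simp_all add: UNIV_bool)
qed

lemma integral_mix_array_prod:
  assumes "finite G" and "G \<subseteq> binom UNIV 2"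
  shows "(\<integral>\<omega>. (\<Prod>s\<in>G. of_bool (mix_array s \<omega>)) \<partial>coins) = (1/2::real) ^ (card G + 1) +
    (\<integral>\<omega>. of_bool (\<not> \<omega> {}) * (\<Prod>s\<in>G. of_bool (cut_edge \<omega> s)) \<partial>coins)"
proof -
  have "{} \<notin> G" using assms(2) by (auto simp: binom_def)
  then have split: "(\<Prod>s\<in>G. of_bool (mix_array s \<omega>)) = (\<Prod>j\<in>insert {} G. of_bool (\<omega> j)) +
      of_bool (\<not> \<omega> {}) * (\<Prod>s\<in>G. of_bool (cut_edge \<omega> s) :: real)" for \<omega>
    using assms(1) by (cases "\<omega> {}") (simp_all add: mix_array_def)
  have "(\<integral>\<omega>. (\<Prod>j\<in>insert {} G. of_bool (\<omega> j)) \<partial>coins) = (1/2::real) ^ (card G + 1)"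
    using integral_coins_prod[of "insert {} G" "\<lambda>_. of_bool"] assms(1) \<open>{} \<notin> G\<close> by simp
  moreover have "integrable coins (\<lambda>\<omega>. \<Prod>j\<in>insert {} G. of_bool (\<omega> j) :: real)"
    "integrable coins (\<lambda>\<omega>. of_bool (\<not> \<omega> {}) * (\<Prod>s\<in>G. of_bool (cut_edge \<omega> s)) :: real)"
    by (intro integrable_coins_bounded[where B=1]; simp add: cut_edge_def prod_le_1 abs_prod)+
  ultimately show ?thesis by (simp add: split)
qed

lemma integral_mix_array_prod_cycle4:
  assumes "distinct [p, q, r, t]" and "G \<subseteq> cycle4 p q r t"
  shows "(\<integral>\<omega>. (\<Prod>s\<in>G. of_bool (mix_array s \<omega>)) \<partial>coins) =
    (if G = cycle4 p q r t then 3/32 else (1/2::real) ^ card G)"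
proof -
  have "finite G" using assms(2) finite_subset by (auto simp: cycle4_def)
  moreover have "G \<subseteq> binom UNIV 2" using assms by (auto simp: cycle4_def binom_def)
  ultimately show ?thesis
    using assms card_cycle4[OF assms(1)]
    by (simp add: integral_mix_array_prod integral_cut_edges_cycle4 power_divide)
qed

lemma edges_in_cycle4:
  assumes "s \<in> binom UNIV 2" and "t \<in> binom UNIV 2"
  shows "\<exists>p q r u. distinct [p, q, r, u] \<and> s \<in> cycle4 p q r u \<and> t \<in> cycle4 p q r u"
proof -
  obtain a b where ab: "a < b" "s = {a, b}" using assms(1) by (rule binom_2_obtain)
  obtain c d where cd: "c < d" "t = {c, d}" using assms(2) by (rule binom_2_obtain)
  define x where "x = b + d + 1"
  have x: "a < x" "b < x" "c < x" "d < x" using ab cd by (auto simp: x_def)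
  have witness: "distinct [p, q, r, u] \<Longrightarrow> {s, t} \<subseteq> cycle4 p q r u \<Longrightarrow> ?thesis" for p q r u
    by blast
  consider "a = c" "b = d" | "a = c" "b \<noteq> d" | "a = d" | "b = c" | "b = d" "a \<noteq> c"
    | "distinct [a, b, c, d]"
    using ab cd by auto
  then show ?thesis
  proof cases
    case 1
    show ?thesis
      by (rule witness[of a b x "x + 1"])
        (use 1 ab cd x in \<open>auto simp: cycle4_def doubleton_eq_iff\<close>)
  next
    case 2
    show ?thesis
      by (rule witness[of b a d x]) (use 2 ab cd x in \<open>auto simp: cycle4_def doubleton_eq_iff\<close>)
  next
    case 3
    show ?thesis
      by (rule witness[of c a b x]) (use 3 ab cd x in \<open>auto simp: cycle4_def doubleton_eq_iff\<close>)
  next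
    case 4
    show ?thesis
      by (rule witness[of a b d x]) (use 4 ab cd x in \<open>auto simp: cycle4_def doubleton_eq_iff\<close>)
  next
    case 5
    show ?thesis
      by (rule witness[of a b c x]) (use 5 ab cd x in \<open>auto simp: cycle4_def doubleton_eq_iff\<close>)
  next
    case 6
    show ?thesis
      by (rule witness[of a b c d]) (use 6 ab cd in \<open>auto simp: cycle4_def doubleton_eq_iff\<close>)
  qed
qed

lemma integral_mix_array_edge:
  assumes "s \<in> binom UNIV 2"
  shows "(\<integral>\<omega>. of_bool (mix_array s \<omega>) \<partial>coins) = (1/2 :: real)"
proof -
  obtain p q r u where "distinct [p, q, r, u]" "s \<in> cycle4 p q r u"
    using edges_in_cycle4[OF assms assms] by blast
  moreover have "card {s} \<noteq> card (cycle4 p q r u)"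
    using card_cycle4[OF \<open>distinct [p, q, r, u]\<close>] by simp
  then have "{s} \<noteq> cycle4 p q r u" by metis
  ultimately show ?thesis using integral_mix_array_prod_cycle4[of p q r u "{s}"] by simp
qed

lemma integral_mix_array_two_edges:
  assumes "s \<in> binom UNIV 2" "t \<in> binom UNIV 2" "s \<noteq> t"
  shows "(\<integral>\<omega>. of_bool (mix_array s \<omega>) * of_bool (mix_array t \<omega>) \<partial>coins) = (1/4 :: real)"
proof -
  obtain p q r u where "distinct [p, q, r, u]" "s \<in> cycle4 p q r u" "t \<in> cycle4 p q r u"
    using edges_in_cycle4[OF assms(1,2)] by blast
  moreover have "card {s, t} \<noteq> card (cycle4 p q r u)"
    using card_cycle4[OF \<open>distinct [p, q, r, u]\<close>] assms(3) by simp
  then have "{s, t} \<noteq> cycle4 p q r u" by metis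
  ultimately show ?thesis
    using integral_mix_array_prod_cycle4[of p q r u "{s, t}"] assms(3)
    by (simp add: power2_eq_square)
qed

lemma box2_eq_cycle4:
  assumes "a < b" "b < c" "c < (d :: nat)"
  shows "box2 {a, b} {c, d} = cycle4 a c b d"
proof
  show "cycle4 a c b d \<subseteq> box2 {a, b} {c, d}"
    using assms by (auto simp: box2_def binom_def cycle4_def)
next
  show "box2 {a, b} {c, d} \<subseteq> cycle4 a c b d"
  proof
    fix s assume s: "s \<in> box2 {a, b} {c, d}"
    then obtain p where p: "s \<inter> {a, b} = {p}" by (auto simp: box2_def card_1_singleton_iff)
    from s obtain q where q: "s \<inter> {c, d} = {q}" by (auto simp: box2_def card_1_singleton_iff)
    have pq: "p \<in> {a, b}" "q \<in> {c, d}" "p \<in> s" "q \<in> s" using p q by blast+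
    have "p \<noteq> q" using pq(1,2) assms by auto
    have "finite s" "card s = 2" using s by (auto simp: box2_def binom_def)
    then have "s = {p, q}" using pq \<open>p \<noteq> q\<close> by (intro card_seteq[symmetric]) auto
    then show "s \<in> cycle4 a c b d" using pq(1,2) by (auto simp: cycle4_def doubleton_eq_iff)
  qed
qed

lemma is_box2_obtain:
  assumes "is_box2 B"
  obtains a b c d where "a < b" "b < c" "c < d" "B = cycle4 a c b d"
proof -
  obtain H1 H2 where H: "card H1 = 2" "card H2 = 2" "Max H1 < Min H2" "B = box2 H1 H2"
    using assms unfolding is_box2_def by blast
  then have "H1 \<in> binom UNIV 2" "H2 \<in> binom UNIV 2"
    by (auto simp: binom_def intro: card_ge_0_finite)
  then obtain a b c d where "a < b" "H1 = {a, b}" "c < d" "H2 = {c, d}"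
    by (metis binom_2_obtain)
  with H that show ?thesis by (simp add: box2_eq_cycle4)
qed

lemma integral_mix_array_prod_box2:
  assumes "is_box2 B" and "G \<subseteq> B"
  shows "(\<integral>\<omega>. (\<Prod>s\<in>G. of_bool (mix_array s \<omega>)) \<partial>coins) =
    (if G = B then 3/32 else (1/2::real) ^ card G)"
proof -
  obtain a b c d where "a < b" "b < c" "c < d" "B = cycle4 a c b d"
    using assms(1) by (rule is_box2_obtain)
  then show ?thesis using assms(2) by (simp add: integral_mix_array_prod_cycle4)
qed

section \<open>Exchangeability\<close>

lemma mix_array_image:
  assumes "inj \<pi>" and "s \<in> binom UNIV 2"
  shows "mix_array (\<pi> ` s) \<omega> = mix_array s (\<lambda>A. \<omega> (\<pi> ` A))"
  using assms(2) by (auto simp: mix_array_def elim!: binom_2_obtain)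

lemma exchangeable2_mix_array: "exchangeable2 coins mix_array"
  unfolding exchangeable2_def
proof (intro allI impI)
  fix \<pi> :: "nat \<Rightarrow> nat" assume "fin_perm \<pi>"
  then have "inj \<pi>" by (simp add: fin_perm_def bij_def)
  then have inj_image: "inj (image \<pi>)" by (simp add: inj_def inj_image_eq_iff)
  let ?T = "\<lambda>\<omega>. \<lambda>A\<in>UNIV. \<omega> (\<pi> ` A)"
  let ?F = "\<lambda>\<omega>. \<lambda>s\<in>binom UNIV 2. mix_array s \<omega>"
  let ?P = "\<Pi>\<^sub>M s\<in>binom UNIV 2. count_space (UNIV :: bool set)"
  have [measurable]: "?T \<in> measurable coins coins"
    unfolding coins_def by (auto intro!: measurable_restrict measurable_component_singleton)
  have [measurable]: "?F \<in> measurable coins ?P" by (auto intro!: measurable_restrict)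
  have reindex: "distr coins coins ?T = coins"
    unfolding coins_def using distr_PiM_reindex[of UNIV "\<lambda>_. coin" "image \<pi>" UNIV]
    inj_image prob_space_coin
    by simp
  have "(\<lambda>\<omega>. \<lambda>s\<in>binom UNIV 2. mix_array (\<pi> ` s) \<omega>) = (\<lambda>\<omega>. ?F (?T \<omega>))"
    using mix_array_image[OF \<open>inj \<pi>\<close>] by (auto simp: fun_eq_iff restrict_UNIV)
  then have "array_law coins (\<lambda>s. mix_array (\<pi> ` s)) = distr coins ?P (\<lambda>\<omega>. ?F (?T \<omega>))"
    by (simp add: array_law_def)
  also have "\<dots> = distr (distr coins coins ?T) ?P ?F"
    by (rule distr_distr[symmetric, unfolded comp_def]) measurable
  finally show "array_law coins (\<lambda>s. mix_array (\<pi> ` s)) = array_law coins mix_array"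
    by (simp add: reindex array_law_def)
qed

section \<open>Conditioning on the entries inside I\<close>

context
  fixes M :: "'w measure" and X :: "nat set \<Rightarrow> 'w \<Rightarrow> bool" and I :: "nat set"
  assumes measurable_X: "\<And>s. s \<in> binom I 2 \<Longrightarrow> X s \<in> measurable M (count_space UNIV)"
begin

lemma gen_sigma_generators_subset: "{X s -` A \<inter> space M | s A. s \<in> binom I 2} \<subseteq> sets M"
  using measurable_X by (auto intro: measurable_sets)

lemma space_gen_sigma [simp]: "space (gen_sigma M X I) = space M"
  unfolding gen_sigma_def using gen_sigma_generators_subset sets.space_closed[of M]
  by (subst space_measure_of_conv) auto

lemma sets_gen_sigma:
  "sets (gen_sigma M X I) = sigma_sets (space M) {X s -` A \<inter> space M | s A. s \<in> binom I 2}"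
  unfolding gen_sigma_def using gen_sigma_generators_subset sets.space_closed[of M]
  by (subst sets_measure_of) auto

lemma subalgebra_gen_sigma: "subalgebra M (gen_sigma M X I)"
  unfolding subalgebra_def sets_gen_sigma
  using sets.sigma_sets_subset[OF gen_sigma_generators_subset] by simp

lemma measurable_gen_sigma:
  "s \<in> binom I 2 \<Longrightarrow> X s \<in> measurable (gen_sigma M X I) (count_space UNIV)"
  by (rule measurableI) (auto simp: sets_gen_sigma)

lemma sigma_finite_subalgebra_gen_sigma:
  "prob_space M \<Longrightarrow> sigma_finite_subalgebra M (gen_sigma M X I)"
  using subalgebra_gen_sigma
  by (intro finite_measure_subalgebra_is_sigma_finite)
     (simp add: finite_measure_subalgebra_def finite_measure_subalgebra_axioms_def prob_space_def)

end

lemma indep_vars_coords: "prob_space.indep_vars coins (\<lambda>_. coin) (\<lambda>j \<omega>. \<omega> j) UNIV"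
proof -
  interpret prob_space coins by (rule prob_space_coins)
  have "distr coins (\<Pi>\<^sub>M _\<in>UNIV. coin) (\<lambda>\<omega>. \<lambda>j\<in>UNIV. \<omega> j) =
      (\<Pi>\<^sub>M j\<in>UNIV. distr coins coin (\<lambda>\<omega>. \<omega> j))"
    unfolding coins_def by (simp add: distr_id2 restrict_UNIV coins.PiM_component)
  then show ?thesis
    by (subst indep_vars_iff_distr_eq_PiM) (simp_all add: measurable_coord)
qed

lemma measurable_coord_coins_on:
  "j \<in> C \<Longrightarrow> (\<lambda>\<omega>. \<omega> j) \<in> measurable (\<Pi>\<^sub>M _\<in>C. coin) (count_space UNIV)"
  using measurable_component_singleton[of j C "\<lambda>_. coin"] by simp

lemma real_cond_exp_coins_indep:
  assumes "sigma_finite_subalgebra coins F"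
    and sets_F: "sets F \<subseteq> sets (vimage_algebra UNIV (\<lambda>\<omega>. restrict \<omega> C) (\<Pi>\<^sub>M _\<in>C. coin))"
    and k: "k \<in> borel_measurable (\<Pi>\<^sub>M _\<in>-C. coin)" "integrable coins (\<lambda>\<omega>. k (restrict \<omega> (-C)))"
  shows "AE \<omega> in coins. real_cond_exp coins F (\<lambda>\<omega>. k (restrict \<omega> (-C))) \<omega> =
    (\<integral>\<omega>. k (restrict \<omega> (-C)) \<partial>coins)"
proof -
  interpret sigma_finite_subalgebra coins F by fact
  interpret P: prob_space coins by (rule prob_space_coins)
  let ?Z1 = "\<lambda>\<omega>. restrict \<omega> C" and ?Z2 = "\<lambda>\<omega>. restrict \<omega> (-C)"
  have Z1: "?Z1 \<in> UNIV \<rightarrow> space (\<Pi>\<^sub>M _\<in>C. coin)" by (simp add: space_PiM)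
  have indep: "P.indep_var (\<Pi>\<^sub>M _\<in>C. coin) ?Z1 (\<Pi>\<^sub>M _\<in>-C. coin) ?Z2"
    using P.indep_var_restrict[OF indep_vars_coords, of C "-C"] by simp
  show ?thesis
  proof (rule real_cond_exp_charact)
    fix A assume "A \<in> sets F"
    then have A: "A \<in> sets coins" using subalg by (auto simp: subalgebra_def)
    from \<open>A \<in> sets F\<close> obtain A' where A': "A' \<in> sets (\<Pi>\<^sub>M _\<in>C. coin)" "A = ?Z1 -` A'"
      using sets_F unfolding sets_vimage_algebra2[OF Z1] by auto
    have indicator_A: "indicator A' \<circ> ?Z1 = (indicator A :: _ \<Rightarrow> real)"
      using A'(2) by (auto simp: fun_eq_iff indicator_def)
    have "P.indep_var borel (indicator A' \<circ> ?Z1) borel (k \<circ> ?Z2)"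
      using A'(1) k(1) by (intro P.indep_var_compose[OF indep]) auto
    moreover have "integrable coins (indicator A :: _ \<Rightarrow> real)"
      using A by (intro integrable_coins_bounded[where B=1]) auto
    ultimately have "(\<integral>\<omega>. indicator A \<omega> * k (?Z2 \<omega>) \<partial>coins) =
        (\<integral>\<omega>. indicator A \<omega> \<partial>coins) * (\<integral>\<omega>. k (?Z2 \<omega>) \<partial>coins)"
      using P.indep_var_lebesgue_integral[of "indicator A' \<circ> ?Z1" "k \<circ> ?Z2"] k(2)
      unfolding indicator_A by (simp add: comp_def)
    then show "(\<integral>\<omega>\<in>A. k (?Z2 \<omega>) \<partial>coins) = (\<integral>\<omega>\<in>A. (\<integral>\<omega>. k (?Z2 \<omega>) \<partial>coins) \<partial>coins)"
      using A by (simp add: set_lebesgue_integral_def P.emeasure_eq_measure mult.commute)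
  qed (use k(2) in auto)
qed

lemma real_cond_exp_coins_prod:
  assumes "sigma_finite_subalgebra coins F"
    and "sets F \<subseteq> sets (vimage_algebra UNIV (\<lambda>\<omega>. restrict \<omega> (-C)) (\<Pi>\<^sub>M _\<in>-C. coin))"
    and "finite C"
  shows "AE \<omega> in coins. real_cond_exp coins F (\<lambda>\<omega>. \<Prod>j\<in>C. of_bool (\<omega> j)) \<omega> = (1/2) ^ card C"
proof -
  let ?k = "\<lambda>\<omega>. \<Prod>j\<in>C. of_bool (\<omega> j) :: real"
  have "?k \<in> borel_measurable (\<Pi>\<^sub>M _\<in>C. coin)"
    by (intro borel_measurable_prod) (auto intro: measurable_compose[OF measurable_coord_coins_on])
  moreover have "integrable coins ?k"
    by (rule integrable_coins_bounded[where B=1]) (auto simp: prod_le_1 abs_prod)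
  ultimately show ?thesis
    using real_cond_exp_coins_indep[OF assms(1,2), of ?k]
      integral_coins_prod[OF assms(3), of "\<lambda>_. of_bool"]
    by simp
qed

lemma sets_gen_sigma_mix_array_subset:
  assumes "C \<subseteq> binom UNIV 2 - binom I 2"
  shows "sets (gen_sigma coins mix_array I) \<subseteq>
    sets (vimage_algebra UNIV (\<lambda>\<omega>. restrict \<omega> (-C)) (\<Pi>\<^sub>M _\<in>-C. coin))"
proof -
  have restrict_in_space: "(\<lambda>\<omega>. restrict \<omega> (-C)) \<in> UNIV \<rightarrow> space (\<Pi>\<^sub>M _\<in>-C. coin)"
    by (simp add: space_PiM)
  \<comment> \<open>The entry at s reads only the coordinates {}, s and the singletons, none of which lies in C.\<close>
  have "mix_array s -` A \<inter> space coins
      \<in> sets (vimage_algebra UNIV (\<lambda>\<omega>. restrict \<omega> (-C)) (\<Pi>\<^sub>M _\<in>-C. coin))"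
    if "s \<in> binom I 2" for s A
  proof -
    obtain a b where ab: "s = {a, b}" using \<open>s \<in> binom I 2\<close> by (rule binom_2_obtain)
    have "{} \<in> -C" "s \<in> -C" "{a} \<in> -C" "{b} \<in> -C"
      using assms \<open>s \<in> binom I 2\<close> by (auto simp: binom_def)
    note [measurable] = this[THEN measurable_coord_coins_on]
    have mix_array_s: "mix_array s = (\<lambda>\<omega>. if \<omega> {} then \<omega> s else \<omega> {a} \<noteq> \<omega> {b})"
      by (simp add: fun_eq_iff mix_array_def ab)
    have "mix_array s \<in> measurable (\<Pi>\<^sub>M _\<in>-C. coin) (count_space UNIV)"
      unfolding mix_array_s by measurable
    then have "mix_array s -` A \<inter> space (\<Pi>\<^sub>M _\<in>-C. coin) \<in> sets (\<Pi>\<^sub>M _\<in>-C. coin)"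
      by (rule measurable_sets) simp
    moreover have "mix_array s (restrict \<omega> (-C)) = mix_array s \<omega>" for \<omega>
      using \<open>{} \<in> -C\<close> \<open>s \<in> -C\<close> \<open>{a} \<in> -C\<close> \<open>{b} \<in> -C\<close> by (simp add: mix_array_s)
    then have "mix_array s -` A \<inter> space coins =
        (\<lambda>\<omega>. restrict \<omega> (-C)) -` (mix_array s -` A \<inter> space (\<Pi>\<^sub>M _\<in>-C. coin)) \<inter> UNIV"
      by (auto simp: space_PiM)
    ultimately show ?thesis
      unfolding sets_vimage_algebra2[OF restrict_in_space] by blast
  qed
  then have "{mix_array s -` A \<inter> space coins | s A. s \<in> binom I 2} \<subseteq>
      sets (vimage_algebra UNIV (\<lambda>\<omega>. restrict \<omega> (-C)) (\<Pi>\<^sub>M _\<in>-C. coin))"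
    by blast
  from sets.sigma_sets_subset[OF this] show ?thesis by (simp add: sets_gen_sigma)
qed

lemma (in sigma_finite_subalgebra) real_cond_exp_eq_on_event:
  assumes "A \<in> sets F" and "integrable M f" "integrable M g" and "\<And>x. x \<in> A \<Longrightarrow> f x = g x"
  shows "AE x in M. x \<in> A \<longrightarrow> real_cond_exp M F f x = real_cond_exp M F g x"
proof -
  have "A \<in> sets M" using assms(1) subalg by (auto simp: subalgebra_def)
  have [measurable]: "indicator A \<in> borel_measurable F" using assms(1) by simp
  have mult: "AE x in M. real_cond_exp M F (\<lambda>x. indicator A x * h x) x =
      indicator A x * real_cond_exp M F h x"
    if "integrable M h" for h
    using that integrable_real_mult_indicator[OF \<open>A \<in> sets M\<close> that]
    by (intro real_cond_exp_mult) (auto simp: mult.commute)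
  have eq: "(\<lambda>x. indicator A x * f x) = (\<lambda>x. indicator A x * g x)"
    using assms(4) by (auto simp: fun_eq_iff split: split_indicator)
  have "AE x in M. real_cond_exp M F (\<lambda>x. indicator A x * g x) x =
      indicator A x * real_cond_exp M F f x"
    using mult[OF assms(2)] unfolding eq .
  moreover have "AE x in M. real_cond_exp M F (\<lambda>x. indicator A x * g x) x =
      indicator A x * real_cond_exp M F g x"
    using mult[OF assms(3)] .
  ultimately show ?thesis by eventually_elim (auto split: split_indicator)
qed

lemma mix_array_triangle_imp_coin:
  "mix_array {p, q} \<omega> \<Longrightarrow> mix_array {q, r} \<omega> \<Longrightarrow> mix_array {p, r} \<omega> \<Longrightarrow> \<omega> {}"
  by (cases "\<omega> {}") (auto simp: mix_array_def cut_edge_doubleton)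

lemma measure_mix_array_triangle:
  assumes "distinct [p, q, r]"
  shows "measure coins {\<omega>. mix_array {p, q} \<omega> \<and> mix_array {q, r} \<omega> \<and> mix_array {p, r} \<omega>} = 1/16"
proof -
  interpret prob_space coins by (rule prob_space_coins)
  define T where "T = {\<omega>. mix_array {p, q} \<omega> \<and> mix_array {q, r} \<omega> \<and> mix_array {p, r} \<omega>}"
  define J where "J = {{}, {p, q}, {q, r}, {p, r}}"
  have "finite J" "card J = 4" using assms by (auto simp: J_def doubleton_eq_iff)
  have "T = {\<omega> \<in> space coins. mix_array {p, q} \<omega> \<and> mix_array {q, r} \<omega> \<and> mix_array {p, r} \<omega>}"
    by (simp add: T_def)
  also have "\<dots> \<in> sets coins" by measurable
  finally have "measure coins T = (\<integral>\<omega>. indicator T \<omega> \<partial>coins)"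
    by (simp add: emeasure_eq_measure)
  also have "\<dots> = (\<integral>\<omega>. (\<Prod>j\<in>J. of_bool (\<omega> j)) \<partial>coins)"
  proof (intro Bochner_Integration.integral_cong refl)
    fix \<omega>
    show "indicator T \<omega> = (\<Prod>j\<in>J. of_bool (\<omega> j) :: real)"
    proof (cases "\<omega> {}")
      case True
      then show ?thesis using assms by (auto simp: T_def J_def doubleton_eq_iff mix_array_def)
    next
      case False
      then show ?thesis
        using mix_array_triangle_imp_coin[of p q \<omega> r]
        by (auto simp: T_def J_def split: split_indicator)
    qed
  qed
  also have "\<dots> = 1/16"
    using integral_coins_prod[OF \<open>finite J\<close>, of "\<lambda>_. of_bool"] \<open>card J = 4\<close>
    by (simp add: power_divide)
  finally show ?thesis by (simp add: T_def)
qed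

lemma real_cond_exp_mix_array_prod_on_triangle:
  assumes B: "finite B" "B \<subseteq> binom UNIV 2" and pqr: "distinct [p, q, r]" "{p, q, r} \<subseteq> I"
  shows "AE \<omega> in coins. mix_array {p, q} \<omega> \<and> mix_array {q, r} \<omega> \<and> mix_array {p, r} \<omega> \<longrightarrow>
    real_cond_exp coins (gen_sigma coins mix_array I) (\<lambda>\<omega>. \<Prod>s\<in>B. of_bool (mix_array s \<omega>)) \<omega> =
    (\<Prod>s\<in>B \<inter> binom I 2. of_bool (mix_array s \<omega>)) * (1/2) ^ card (B - binom I 2)"
proof -
  define F where "F = gen_sigma coins mix_array I"
  interpret sigma_finite_subalgebra coins F
    unfolding F_def
    by (intro sigma_finite_subalgebra_gen_sigma measurable_mix_array prob_space_coins)
  define T where "T = {\<omega>. mix_array {p, q} \<omega> \<and> mix_array {q, r} \<omega> \<and> mix_array {p, r} \<omega>}"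
  define h where "h \<omega> = (\<Prod>s\<in>B \<inter> binom I 2. of_bool (mix_array s \<omega>) :: real)" for \<omega>
  define k where "k \<omega> = (\<Prod>s\<in>B - binom I 2. of_bool (\<omega> s) :: real)" for \<omega>
  have edges: "{p, q} \<in> binom I 2" "{q, r} \<in> binom I 2" "{p, r} \<in> binom I 2"
    using pqr by (auto simp: binom_def)
  have measurable_F: "s \<in> binom I 2 \<Longrightarrow> mix_array s \<in> measurable F (count_space UNIV)" for s
    unfolding F_def by (rule measurable_gen_sigma[OF measurable_mix_array])
  have "T = (mix_array {p, q} -` {True} \<inter> space F) \<inter> (mix_array {q, r} -` {True} \<inter> space F) \<inter>
      (mix_array {p, r} -` {True} \<inter> space F)"
    by (auto simp: T_def F_def)
  also have "\<dots> \<in> sets F" using edges by (intro sets.Int measurable_sets[OF measurable_F]) auto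
  finally have "T \<in> sets F" .
  have [measurable]: "h \<in> borel_measurable F"
    unfolding h_def by (intro borel_measurable_prod measurable_compose[OF measurable_F]) auto
  have hM: "h \<in> borel_measurable coins" using subalg by (simp add: measurable_from_subalg)
  have kM: "k \<in> borel_measurable coins" unfolding k_def by measurable
  have "integrable coins (\<lambda>\<omega>. \<Prod>s\<in>B. of_bool (mix_array s \<omega>) :: real)"
    by (intro integrable_coins_bounded[where B=1]) (simp_all add: prod_le_1 abs_prod)
  moreover have "integrable coins (\<lambda>\<omega>. h \<omega> * k \<omega>)"
    using hM kM by (intro integrable_coins_bounded[where B=1])
      (simp_all add: h_def k_def abs_mult mult_le_one prod_le_1 prod_nonneg abs_prod)
  moreover have "(\<Prod>s\<in>B. of_bool (mix_array s \<omega>)) = h \<omega> * k \<omega>" if "\<omega> \<in> T" for \<omega>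
  proof -
    have "\<omega> {}" using that mix_array_triangle_imp_coin[of p q \<omega> r] by (simp add: T_def)
    have "(\<Prod>s\<in>B. of_bool (mix_array s \<omega>)) =
        h \<omega> * (\<Prod>s\<in>B - binom I 2. of_bool (mix_array s \<omega>) :: real)"
      unfolding h_def by (rule prod.Int_Diff[OF B(1)])
    also have "\<dots> = h \<omega> * k \<omega>" using \<open>\<omega> {}\<close> by (simp add: k_def mix_array_def)
    finally show ?thesis .
  qed
  ultimately have "AE \<omega> in coins. \<omega> \<in> T \<longrightarrow>
      real_cond_exp coins F (\<lambda>\<omega>. \<Prod>s\<in>B. of_bool (mix_array s \<omega>)) \<omega> =
      real_cond_exp coins F (\<lambda>\<omega>. h \<omega> * k \<omega>) \<omega>"
    using \<open>T \<in> sets F\<close> by (intro real_cond_exp_eq_on_event)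
  moreover have "AE \<omega> in coins. real_cond_exp coins F (\<lambda>\<omega>. h \<omega> * k \<omega>) \<omega> =
      h \<omega> * real_cond_exp coins F k \<omega>"
    using \<open>integrable coins (\<lambda>\<omega>. h \<omega> * k \<omega>)\<close> kM by (intro real_cond_exp_mult) simp_all
  moreover have "AE \<omega> in coins. real_cond_exp coins F k \<omega> = (1/2) ^ card (B - binom I 2)"
    unfolding k_def F_def using B
    by (intro real_cond_exp_coins_prod sigma_finite_subalgebra_gen_sigma prob_space_coins
        sets_gen_sigma_mix_array_subset) auto
  ultimately show ?thesis
    unfolding F_def[symmetric] by eventually_elim (simp add: T_def h_def)
qed

lemma prod_of_bool_eq:
  "finite A \<Longrightarrow> (\<Prod>x\<in>A. of_bool (P x)) = (of_bool (\<forall>x\<in>A. P x) :: 'b :: comm_semiring_1)"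
  by (induction A rule: finite_induct) auto

lemma box_moment_gap:
  "h \<in> {0, 1} \<Longrightarrow> m \<le> 4 \<Longrightarrow> (1/2::real) ^ 11 \<le> \<bar>h * (1/2) ^ m - 3/32\<bar>"
  by (auto simp: le_Suc_eq numeral_eq_Suc)

lemma measure_real_cond_exp_box_large:
  assumes B: "finite B" "B \<subseteq> binom UNIV 2" "card B \<le> 4" and I: "3 \<le> card I"
  shows "(1/2) ^ 11 \<le> measure coins {\<omega> \<in> space coins. (1/2) ^ 11 \<le>
    \<bar>real_cond_exp coins (gen_sigma coins mix_array I)
      (\<lambda>\<omega>. - 3/32 + (\<Prod>s\<in>B. of_bool (mix_array s \<omega>))) \<omega>\<bar>}"
    (is "_ \<le> measure coins ?S")
proof -
  define F where "F = gen_sigma coins mix_array I"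
  interpret sigma_finite_subalgebra coins F
    unfolding F_def
    by (intro sigma_finite_subalgebra_gen_sigma measurable_mix_array prob_space_coins)
  interpret P: prob_space coins by (rule prob_space_coins)
  obtain p q r where pqr: "distinct [p, q, r]" "{p, q, r} \<subseteq> I"
    using I by (auto simp: numeral_3_eq_3 card_le_Suc_iff)
  define T where "T = {\<omega>. mix_array {p, q} \<omega> \<and> mix_array {q, r} \<omega> \<and> mix_array {p, r} \<omega>}"
  let ?f = "\<lambda>\<omega>. \<Prod>s\<in>B. of_bool (mix_array s \<omega>) :: real"
  have "integrable coins ?f"
    by (intro integrable_coins_bounded[where B=1]) (simp_all add: prod_le_1 abs_prod)
  have card: "card (B - binom I 2) \<le> 4" and finite: "finite (B \<inter> binom I 2)"
    using B by (auto intro: card_mono order_trans)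
  have "AE \<omega> in coins. real_cond_exp coins F (\<lambda>\<omega>. - 3/32 + ?f \<omega>) \<omega> =
      real_cond_exp coins F (\<lambda>_. - 3/32) \<omega> + real_cond_exp coins F ?f \<omega>"
    using \<open>integrable coins ?f\<close> by (intro real_cond_exp_add) auto
  moreover have "AE \<omega> in coins. real_cond_exp coins F (\<lambda>_. - 3/32) \<omega> = - 3/32"
    by (intro real_cond_exp_F_meas) auto
  moreover note real_cond_exp_mix_array_prod_on_triangle[OF B(1,2) pqr, folded F_def]
  ultimately have "AE \<omega> in coins. \<omega> \<in> T \<longrightarrow> \<omega> \<in> ?S"
  proof eventually_elim
    case (elim \<omega>)
    show ?case
    proof
      let ?h = "\<Prod>s\<in>B \<inter> binom I 2. of_bool (mix_array s \<omega>) :: real"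
      assume "\<omega> \<in> T"
      with elim have "real_cond_exp coins F (\<lambda>\<omega>. - 3/32 + ?f \<omega>) \<omega> =
          ?h * (1/2) ^ card (B - binom I 2) - 3/32"
        by (simp add: T_def)
      moreover have "?h \<in> {0, 1}" using finite by (auto simp: prod_of_bool_eq)
      ultimately have "(1/2) ^ 11 \<le> \<bar>real_cond_exp coins F (\<lambda>\<omega>. - 3/32 + ?f \<omega>) \<omega>\<bar>"
        using box_moment_gap[OF _ card] by simp
      then show "\<omega> \<in> ?S" by (simp add: F_def)
    qed
  qed
  moreover have "?S \<in> sets coins"
    using borel_measurable_cond_exp[THEN measurable_from_subalg[OF subalg]]
    unfolding F_def by measurable
  ultimately have "measure coins T \<le> measure coins ?S"
    by (rule P.finite_measure_mono_AE)
  moreover have "measure coins T = 1/16"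
    unfolding T_def using pqr(1) by (rule measure_mix_array_triangle)
  ultimately have "1/16 \<le> measure coins ?S" by simp
  then show ?thesis by (simp add: power_divide)
qed

section \<open>A degree-4 polynomial\<close>

definition box0 :: "nat set set" where
  "box0 = box2 {1, 2} {3, 4}"

definition box0_coeff :: "nat set set \<Rightarrow> real" where
  "box0_coeff G = of_bool (G = box0)"

lemma box0_eq_cycle4: "box0 = cycle4 1 3 2 4"
  by (simp add: box0_def box2_eq_cycle4)

lemma is_box2_box0: "is_box2 box0"
  unfolding is_box2_def box0_def by (intro exI[of _ "{1, 2}"] exI[of _ "{3, 4}"]) simp

lemma box0_in_binom: "4 \<le> n \<Longrightarrow> box0 \<in> binom (binom {1..n} 2) 4"
  using card_cycle4[of 1 3 2 4] by (auto simp: box0_eq_cycle4 cycle4_def binom_def)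

lemma finite_binom_binom: "finite (binom (binom {1..n :: nat} 2) k)"
  by (rule finite_subset[of _ "Pow (Pow {1..n})"]) (auto simp: binom_def)

lemma tmpoly4_box0_coeff: "4 \<le> n \<Longrightarrow> tmpoly4 n c box0_coeff x = c + (\<Prod>s\<in>box0. x s)"
proof -
  assume "4 \<le> n"
  have "(\<Sum>G\<in>binom (binom {1..n} 2) 4. box0_coeff G * (\<Prod>s\<in>G. x s)) =
      (\<Sum>G\<in>binom (binom {1..n} 2) 4. if G = box0 then \<Prod>s\<in>G. x s else 0)"
    by (rule sum.cong) (simp_all add: box0_coeff_def)
  then show ?thesis
    using box0_in_binom[OF \<open>4 \<le> n\<close>] finite_binom_binom by (simp add: tmpoly4_def sum.delta')
qed

lemma has_degree4_box0_coeff: "4 \<le> n \<Longrightarrow> has_degree4 n box0_coeff"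
  unfolding has_degree4_def box0_coeff_def using box0_in_binom by auto

lemma integral_tmpoly4_box0:
  assumes "4 \<le> n"
  shows "(\<integral>\<omega>. tmpoly4 n (- 3/32) box0_coeff (\<lambda>s. of_bool (mix_array s \<omega>)) \<partial>coins) = 0"
proof -
  interpret prob_space coins by (rule prob_space_coins)
  have "integrable coins (\<lambda>\<omega>. \<Prod>s\<in>box0. of_bool (mix_array s \<omega>) :: real)"
    by (intro integrable_coins_bounded[where B=1]) (simp_all add: prod_le_1 abs_prod)
  then show ?thesis
    using integral_mix_array_prod_box2[OF is_box2_box0 order_refl] assms
    by (simp add: tmpoly4_box0_coeff prob_space[simplified])
qed

lemma tmpoly4_box0_properties:
  assumes "8 \<le> n"
  shows "\<exists>c a. has_degree4 n a \<and>
      prob_space.expectation coins (\<lambda>\<omega>. tmpoly4 n c a (\<lambda>s. of_bool (mix_array s \<omega>))) = 0 \<and>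
      (AE \<omega> in coins. \<bar>tmpoly4 n c a (\<lambda>s. of_bool (mix_array s \<omega>))\<bar> \<le> 1) \<and>
      (\<forall>I. I \<subseteq> {1..n} \<and> card I \<ge> 8 \<longrightarrow>
         measure coins {\<omega> \<in> space coins.
            \<bar>real_cond_exp coins (gen_sigma coins mix_array I)
               (\<lambda>\<omega>. tmpoly4 n c a (\<lambda>s. of_bool (mix_array s \<omega>))) \<omega>\<bar> \<ge> (1/2) ^ 11}
         \<ge> (1/2) ^ 11)"
proof (intro exI[of _ "- 3/32"] exI[of _ box0_coeff] conjI allI impI AE_I2)
  have n: "4 \<le> n" using assms by simp
  show "has_degree4 n box0_coeff" using n by (rule has_degree4_box0_coeff)
  show "prob_space.expectation coins
      (\<lambda>\<omega>. tmpoly4 n (- 3/32) box0_coeff (\<lambda>s. of_bool (mix_array s \<omega>))) = 0"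
    using n by (rule integral_tmpoly4_box0)
  fix \<omega>
  have "0 \<le> (\<Prod>s\<in>box0. of_bool (mix_array s \<omega>) :: real)"
    "(\<Prod>s\<in>box0. of_bool (mix_array s \<omega>) :: real) \<le> 1"
    by (simp_all add: prod_nonneg prod_le_1)
  then show "\<bar>tmpoly4 n (- 3/32) box0_coeff (\<lambda>s. of_bool (mix_array s \<omega>))\<bar> \<le> 1"
    by (simp add: tmpoly4_box0_coeff[OF n])
next
  have n: "4 \<le> n" using assms by simp
  have box0: "finite box0" "box0 \<subseteq> binom UNIV 2" "card box0 \<le> 4"
    using box0_in_binom[OF n] by (auto simp: binom_def)
  fix I :: "nat set" assume "I \<subseteq> {1..n} \<and> 8 \<le> card I"
  then show "(1/2) ^ 11 \<le> measure coins {\<omega> \<in> space coins. (1/2) ^ 11 \<le>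
      \<bar>real_cond_exp coins (gen_sigma coins mix_array I)
        (\<lambda>\<omega>. tmpoly4 n (- 3/32) box0_coeff (\<lambda>s. of_bool (mix_array s \<omega>))) \<omega>\<bar>}"
    using measure_real_cond_exp_box_large[OF box0, of I] by (simp add: tmpoly4_box0_coeff[OF n])
qed

theorem propositionA1:
  "\<exists>(M :: (nat set \<Rightarrow> bool) measure) (X :: nat set \<Rightarrow> (nat set \<Rightarrow> bool) \<Rightarrow> bool).
     prob_space M \<and>
     (\<forall>s\<in>binom UNIV 2. X s \<in> measurable M (count_space UNIV)) \<and>
     exchangeable2 M X \<and>
     (\<forall>s\<in>binom UNIV 2. prob_space.expectation M (\<lambda>\<omega>. of_bool (X s \<omega>) :: real) = 1/2) \<and>
     (\<forall>s\<in>binom UNIV 2. \<forall>t\<in>binom UNIV 2. s \<noteq> t \<longrightarrow>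
        prob_space.expectation M (\<lambda>\<omega>. of_bool (X s \<omega>) * of_bool (X t \<omega>) :: real) = 1/4) \<and>
     (\<forall>B G. is_box2 B \<and> G \<subseteq> B \<and> G \<noteq> {} \<and> G \<noteq> B \<longrightarrow>
        prob_space.expectation M (\<lambda>\<omega>. (\<Prod>s\<in>G. of_bool (X s \<omega>)) :: real) = (1/2) ^ card G) \<and>
     (\<forall>B. is_box2 B \<longrightarrow>
        prob_space.expectation M (\<lambda>\<omega>. (\<Prod>s\<in>B. of_bool (X s \<omega>)) :: real) = 3/2 * (1/2) ^ 4) \<and>
     (\<forall>n::nat. n \<ge> 8 \<longrightarrow>
        (\<exists>c a. has_degree4 n a \<and>
           prob_space.expectation M (\<lambda>\<omega>. tmpoly4 n c a (\<lambda>s. of_bool (X s \<omega>))) = 0 \<and>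
           (AE \<omega> in M. \<bar>tmpoly4 n c a (\<lambda>s. of_bool (X s \<omega>))\<bar> \<le> 1) \<and>
           (\<forall>I. I \<subseteq> {1..n} \<and> card I \<ge> 8 \<longrightarrow>
              measure M {\<omega> \<in> space M.
                 \<bar>real_cond_exp M (gen_sigma M X I)
                    (\<lambda>\<omega>. tmpoly4 n c a (\<lambda>s. of_bool (X s \<omega>))) \<omega>\<bar> \<ge> (1/2) ^ 11}
              \<ge> (1/2) ^ 11)))"
proof (intro exI[of _ coins] exI[of _ mix_array] conjI ballI allI impI tmpoly4_box0_properties)
  fix B G :: "nat set set"
  assume "is_box2 B \<and> G \<subseteq> B \<and> G \<noteq> {} \<and> G \<noteq> B"
  then show "prob_space.expectation coins (\<lambda>\<omega>. \<Prod>s\<in>G. of_bool (mix_array s \<omega>)) =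
      (1/2 :: real) ^ card G"
    using integral_mix_array_prod_box2[of B G] by simp
next
  fix B :: "nat set set"
  assume "is_box2 B"
  then show "prob_space.expectation coins (\<lambda>\<omega>. \<Prod>s\<in>B. of_bool (mix_array s \<omega>)) =
      3/2 * (1/2 :: real) ^ 4"
    using integral_mix_array_prod_box2[of B B] by (simp add: power_divide)
qed (simp_all add: prob_space_coins exchangeable2_mix_array integral_mix_array_edge
    integral_mix_array_two_edges)

end
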